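(* Let $(Z_N(i))_{0\le i\le N}$ be the breadth-first walk of a Poisson random hypergraph on $N$ vertices with parameters $(\beta_j)_{j\ge2}$, let $C_N(i)$ be the number of children of the $i$th vertex $v(i)$ in the breadth-first ordering, and $P_N(i)$ the number of patches added before the $(i+1)$st deletion. Let $$\lambda_2(N,i)=N\sum_{j=0}^{i}\beta_{j+2}\binom{i}{j}\Big/\binom{N}{j+2},\qquad \rho(N,i)=1-\exp(-\lambda_2(N,i)).$$ Then, for $1\le i\le N$, given $Z_N(i-1)$ and $P_N(i-1)$, the distribution of $C_N(i)$ is $$\mathrm{Bin}\big(N-(i-1)-Z_N(i-1)-P_N(i-1),\ \rho(N,i-1)\big).$$
   Context: Poisson random hypergraph: vertex set $\{1,\dots,N\}$; $(\beta_j)_{j\ge2}$ nonnegative reals, $\beta(t)=\sum_{j\ge2}\beta_jt^j$ with $\beta'(1)<\infty$; for each $A$ with $|A|=j\ge2$, the number of hyperedges on $A$ is Poisson with mean $N\beta_j/\binom{N}{j}$, independently over $A$. A 1-edge is a patch; deleting a patched vertex $v$ removes it and replaces each other hyperedge containing $v$ by the hyperedge on its remaining vertices (2-edges containing $v$ become patches). Breadth-first ordering: put a patch on the lowest-labelled vertex, call it $v(1)$. Having processed $v(1),\dots,v(i-1)$, the children of $v(i)$ are the not-yet-numbered vertices $w$ such that some original hyperedge consists of $v(i)$, $w$ and a subset of $\{v(1),\dots,v(i-1)\}$; they receive the next numbers in order of original label, then $v(i)$ is deleted with collapse; if no numbered-but-undeleted vertex remains, a patch is put on the lowest-labelled un-numbered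 vertex, which becomes the next numbered vertex. Breadth-first walk: $Z_N(0)=0$, $Z_N(i)=Z_N(i-1)+C_N(i)-1$. Patch count: $P_N(0)=1$, $P_N(i)=1-\min_{j\le i}Z_N(j)$ for $i\ge1$. *)

theory Defs
  imports "HOL-Probability.Probability"
begin

definition pois :: "real \<Rightarrow> nat pmf" where
  "pois r = (if r = 0 then return_pmf 0 else poisson_pmf r)"

text \<open>A hypergraph on {1..N} is a multiplicity function H: H A is the number of
  hyperedges on the vertex set A. Possible hyperedge sets: subsets of size >= 2.\<close>
definition hsets :: "nat \<Rightarrow> nat set set" where
  "hsets N = {A. A \<subseteq> {1..N} \<and> card A \<ge> 2}"

definition poisson_hypergraph :: "nat \<Rightarrow> (nat \<Rightarrow> real) \<Rightarrow> (nat set \<Rightarrow> nat) pmf" where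
  "poisson_hypergraph N \<beta> =
     Pi_pmf (hsets N) 0
       (\<lambda>A. pois (real N * \<beta> (card A) / real (N choose card A)))"

text \<open>bf_pre N os i: the numbered list before the i-th deletion (i >= 1), given the
  list os of vertices numbered after i-1 deletions; if no numbered-but-undeleted vertex
  remains, a patch is put on the lowest-labelled un-numbered vertex.\<close>
definition bf_pre :: "nat \<Rightarrow> nat list \<Rightarrow> nat \<Rightarrow> nat list" where
  "bf_pre N os i = (if length os < i then os @ [Min ({1..N} - set os)] else os)"

text \<open>Children of v(i) = os'!(i-1): not-yet-numbered w such that some original hyperedge
  consists of v(i), w and a subset of {v(1),...,v(i-1)}.\<close>
definition bf_children :: "nat \<Rightarrow> (nat set \<Rightarrow> nat) \<Rightarrow> nat list \<Rightarrow> nat \<Rightarrow> nat set" where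
  "bf_children N H os' i =
     {w \<in> {1..N} - set os'. \<exists>S. S \<subseteq> set (take (i - 1) os') \<and>
        H (insert (os' ! (i - 1)) (insert w S)) > 0}"

fun bf_order :: "nat \<Rightarrow> (nat set \<Rightarrow> nat) \<Rightarrow> nat \<Rightarrow> nat list" where
  "bf_order N H 0 = []"
| "bf_order N H (Suc i) =
     (let os' = bf_pre N (bf_order N H i) (Suc i)
      in os' @ sorted_list_of_set (bf_children N H os' (Suc i)))"

definition bf_C :: "nat \<Rightarrow> (nat set \<Rightarrow> nat) \<Rightarrow> nat \<Rightarrow> nat" where
  "bf_C N H i = card (bf_children N H (bf_pre N (bf_order N H (i - 1)) i) i)"

definition bf_Z :: "nat \<Rightarrow> (nat set \<Rightarrow> nat) \<Rightarrow> nat \<Rightarrow> int" where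
  "bf_Z N H i = (\<Sum>k = 1..i. int (bf_C N H k) - 1)"

definition bf_P :: "nat \<Rightarrow> (nat set \<Rightarrow> nat) \<Rightarrow> nat \<Rightarrow> int" where
  "bf_P N H i = (if i = 0 then 1 else 1 - Min ((bf_Z N H) ` {0..i}))"

definition lambda2 :: "(nat \<Rightarrow> real) \<Rightarrow> nat \<Rightarrow> nat \<Rightarrow> real" where
  "lambda2 \<beta> N i = real N * (\<Sum>j = 0..i. \<beta> (j + 2) * real (i choose j) / real (N choose (j + 2)))"

definition rho :: "(nat \<Rightarrow> real) \<Rightarrow> nat \<Rightarrow> nat \<Rightarrow> real" where
  "rho \<beta> N i = 1 - exp (- lambda2 \<beta> N i)"

end

theory Submission
  imports Defs
begin

(* Call history the sequence of numbered lists after 0, ..., i-1 steps. It is determined by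
   the hyperedges inspected during those steps, each of which consists of some v(k), k < i, a
   vertex not yet numbered at step k, and some of v(1), ..., v(k-1). The hyperedges inspected
   at step i contain v(i) and a vertex that is still un-numbered, so none of them was inspected
   before; by independence of the Poisson multiplicities the children of v(i) are independent
   of the history, of which Z_N(i-1) and P_N(i-1) are functions. Given the history, the
   un-numbered vertices w are children independently, since their candidate hyperedges
   {v(i), w} \<union> S, S \<subseteq> {v(1), ..., v(i-1)}, are disjoint for different w; these have total
   mean lambda2(N, i-1), so each w is a child with probability rho(N, i-1). There are
   N - (i-1) - Z_N(i-1) - P_N(i-1) of them, as the numbered list before the i-th deletion has
   length (i-1) + Z_N(i-1) + P_N(i-1). *)

section \<open>Independence in finite products of distributions\<close>

lemma measure_pmf_prob_pair_Times:
  "measure_pmf.prob (pair_pmf M N) (A \<times> B) = measure_pmf.prob M A * measure_pmf.prob N B"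
proof -
  have "measure_pmf.prob (pair_pmf M N) (A \<times> B)
      = measure_pmf.prob (pair_pmf M N) ((A \<times> B) \<inter> set_pmf (pair_pmf M N))"
    by (rule measure_Int_set_pmf[symmetric])
  also have "(A \<times> B) \<inter> set_pmf (pair_pmf M N) = (A \<inter> set_pmf M) \<times> (B \<inter> set_pmf N)"
    by auto
  also have "measure_pmf.prob (pair_pmf M N) \<dots>
      = measure_pmf.prob M (A \<inter> set_pmf M) * measure_pmf.prob N (B \<inter> set_pmf N)"
    by (rule measure_pmf_prob_product) auto
  finally show ?thesis by (simp add: measure_Int_set_pmf)
qed

lemma Pi_pmf_prob_indep:
  fixes D :: "'a \<Rightarrow> 'b pmf"
  assumes "finite I" "F \<subseteq> I" "G \<subseteq> I" "F \<inter> G = {}"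
    and P: "\<And>H H'. (\<forall>x\<in>F. H x = H' x) \<Longrightarrow> P H = P H'"
    and Q: "\<And>H H'. (\<forall>x\<in>G. H x = H' x) \<Longrightarrow> Q H = Q H'"
  shows "measure_pmf.prob (Pi_pmf I d D) {H. P H \<and> Q H}
       = measure_pmf.prob (Pi_pmf I d D) {H. P H} * measure_pmf.prob (Pi_pmf I d D) {H. Q H}"
proof -
  define merge where "merge = (\<lambda>(f :: 'a \<Rightarrow> 'b, g) x. if x \<in> F then f x else g x)"
  define M where "M = pair_pmf (Pi_pmf F d D) (Pi_pmf (I - F) d D)"
  have "Pi_pmf (F \<union> (I - F)) d D = map_pmf merge M"
    unfolding merge_def M_def using assms(1,2) by (intro Pi_pmf_union) (auto intro: finite_subset)
  moreover have "F \<union> (I - F) = I" using assms(2) by blast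
  ultimately have split: "Pi_pmf I d D = map_pmf merge M" by simp
  have P_merge: "P (merge (f, g)) = P f" for f g by (rule P) (auto simp: merge_def)
  have Q_merge: "Q (merge (f, g)) = Q g" for f g
    by (rule Q) (use assms(3,4) in \<open>auto simp: merge_def\<close>)
  have "merge -` {H. P H \<and> Q H} = {f. P f} \<times> {g. Q g}"
    and "merge -` {H. P H} = {f. P f} \<times> UNIV" and "merge -` {H. Q H} = UNIV \<times> {g. Q g}"
    using P_merge Q_merge by auto
  then show ?thesis
    by (simp only: split measure_map_pmf M_def measure_pmf_prob_pair_Times) simp
qed

lemma Pi_pmf_prob_all_eq:
  assumes "finite I" "E \<subseteq> I"
  shows "measure_pmf.prob (Pi_pmf I d D) {H. \<forall>x\<in>E. H x = c} = (\<Prod>x\<in>E. pmf (D x) c)"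
proof -
  have "{H. \<forall>x\<in>E. H x = c} = Pi I (\<lambda>x. if x \<in> E then {c} else UNIV)"
    using assms(2) by (auto simp: Pi_def)
  then have "measure_pmf.prob (Pi_pmf I d D) {H. \<forall>x\<in>E. H x = c}
      = (\<Prod>x\<in>I. measure_pmf.prob (D x) (if x \<in> E then {c} else UNIV))"
    using assms(1) by (simp add: measure_Pi_pmf_Pi)
  also have "\<dots> = (\<Prod>x\<in>I. if x \<in> E then pmf (D x) c else 1)"
    by (intro prod.cong) (auto simp: measure_pmf_single)
  also have "\<dots> = (\<Prod>x\<in>E. pmf (D x) c)"
    using assms by (simp add: prod.If_cases Int_absorb1)
  finally show ?thesis .
qed

lemma measure_pmf_prob_eq_sum_fibres:
  assumes "finite (range f)"
  shows "measure_pmf.prob M X = (\<Sum>t\<in>range f. measure_pmf.prob M (X \<inter> f -` {t}))"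
proof -
  have "X = (\<Union>t\<in>range f. X \<inter> f -` {t})" by auto
  then have "measure_pmf.prob M X = measure_pmf.prob M (\<Union>t\<in>range f. X \<inter> f -` {t})" by simp
  also have "\<dots> = (\<Sum>t\<in>range f. measure_pmf.prob M (X \<inter> f -` {t}))"
    using assms
    by (intro measure_pmf.finite_measure_finite_Union) (auto simp: disjoint_family_on_def)
  finally show ?thesis .
qed

lemma Pi_pmf_prob_fibre_indep:
  fixes f :: "('a \<Rightarrow> 'b) \<Rightarrow> 't"
  assumes "finite I" "F \<subseteq> I" "G \<subseteq> I" "F \<inter> G = {}"
    and f_det: "\<And>H H'. f H = t \<Longrightarrow> (\<forall>x\<in>F. H x = H' x) \<Longrightarrow> f H' = t"
    and "\<And>H H'. (\<forall>x\<in>G. H x = H' x) \<Longrightarrow> Q H = Q H'"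
  shows "measure_pmf.prob (Pi_pmf I d D) {H. f H = t \<and> Q H}
       = measure_pmf.prob (Pi_pmf I d D) {H. f H = t} * measure_pmf.prob (Pi_pmf I d D) {H. Q H}"
proof (rule Pi_pmf_prob_indep[OF assms(1-4)])
  show "(f H = t) = (f H' = t)" if "\<forall>x\<in>F. H x = H' x" for H H'
    using f_det[of H H'] f_det[of H' H] that by auto
qed (rule assms(6))

lemma Pi_pmf_prob_indep_of_history:
  fixes f :: "('a \<Rightarrow> 'b) \<Rightarrow> 't"
  assumes I: "finite I" and fin: "finite (range f)"
    and F: "\<And>t. t \<in> range f \<Longrightarrow> F t \<subseteq> I" and G: "\<And>t. t \<in> range f \<Longrightarrow> G t \<subseteq> I"
    and FG: "\<And>t. t \<in> range f \<Longrightarrow> F t \<inter> G t = {}"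
    and f_det: "\<And>H H'. (\<forall>x\<in>F (f H). H x = H' x) \<Longrightarrow> f H' = f H"
    and Q_det: "\<And>t H H'. (\<forall>x\<in>G t. H x = H' x) \<Longrightarrow> Q t H = Q t H'"
    and A: "\<And>H H'. f H = f H' \<Longrightarrow> H \<in> A \<longleftrightarrow> H' \<in> A"
    and q: "\<And>H. H \<in> A \<Longrightarrow> measure_pmf.prob (Pi_pmf I d D) {H'. Q (f H) H'} = q"
  shows "measure_pmf.prob (Pi_pmf I d D) {H \<in> A. Q (f H) H}
       = measure_pmf.prob (Pi_pmf I d D) A * q"
proof -
  let ?M = "Pi_pmf I d D"
  have fibre: "measure_pmf.prob ?M ({H \<in> A. Q (f H) H} \<inter> f -` {t})
      = measure_pmf.prob ?M (A \<inter> f -` {t}) * q" if t: "t \<in> range f" for t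
  proof (cases "A \<inter> f -` {t} = {}")
    case True
    then have "{H \<in> A. Q (f H) H} \<inter> f -` {t} = {}" by blast
    with True show ?thesis by simp
  next
    case False
    then obtain H0 where H0: "H0 \<in> A" "f H0 = t" by blast
    then have "A \<inter> f -` {t} = {H. f H = t}" using A by blast
    moreover have "{H \<in> A. Q (f H) H} \<inter> f -` {t} = {H. f H = t \<and> Q t H}"
      using calculation by auto
    moreover have "measure_pmf.prob ?M {H. f H = t \<and> Q t H}
        = measure_pmf.prob ?M {H. f H = t} * measure_pmf.prob ?M {H. Q t H}"
      using f_det by (intro Pi_pmf_prob_fibre_indep[OF I F[OF t] G[OF t] FG[OF t]] Q_det) metis
    ultimately show ?thesis using q[OF H0(1)] H0(2) by simp
  qed
  have "measure_pmf.prob ?M {H \<in> A. Q (f H) H}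
      = (\<Sum>t\<in>range f. measure_pmf.prob ?M ({H \<in> A. Q (f H) H} \<inter> f -` {t}))"
    by (rule measure_pmf_prob_eq_sum_fibres[OF fin])
  also have "\<dots> = (\<Sum>t\<in>range f. measure_pmf.prob ?M (A \<inter> f -` {t})) * q"
    using fibre by (simp add: sum_distrib_right)
  also have "(\<Sum>t\<in>range f. measure_pmf.prob ?M (A \<inter> f -` {t})) = measure_pmf.prob ?M A"
    by (rule measure_pmf_prob_eq_sum_fibres[OF fin, symmetric])
  finally show ?thesis .
qed

section \<open>Counting independent events of equal probability\<close>

lemma pmf_binomial_Suc:
  fixes p :: real
  assumes "0 \<le> p" "p \<le> 1"
  shows "pmf (binomial_pmf (Suc n) p) k
       = (if k = 0 then 0 else p * pmf (binomial_pmf n p) (k - 1)) + (1 - p) * pmf (binomial_pmf n p) k"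
proof (cases k)
  case (Suc j)
  show ?thesis
  proof (cases "j < n")
    case True
    then have split_power: "(1 - p) ^ (n - j) = (1 - p) * (1 - p) ^ (n - Suc j)"
      by (metis Suc_diff_Suc power_Suc)
    show ?thesis using True assms Suc by (simp add: split_power algebra_simps)
  qed (use assms Suc in \<open>simp add: binomial_eq_0\<close>)
qed (use assms in simp)

lemma Pi_pmf_prob_card_insert:
  fixes B :: "'w \<Rightarrow> ('a \<Rightarrow> 'b) \<Rightarrow> bool" and E :: "'w \<Rightarrow> 'a set"
  assumes I: "finite I" and W: "finite W" "a \<notin> W"
    and E: "\<And>w. w \<in> insert a W \<Longrightarrow> E w \<subseteq> I" and disj: "\<And>w. w \<in> W \<Longrightarrow> E a \<inter> E w = {}"
    and B: "\<And>w H H'. w \<in> insert a W \<Longrightarrow> (\<forall>x\<in>E w. H x = H' x) \<Longrightarrow> B w H = B w H'"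
    and pa: "measure_pmf.prob (Pi_pmf I d D) {H. B a H} = \<rho>"
  shows "measure_pmf.prob (Pi_pmf I d D) {H. card {w\<in>insert a W. B w H} = k}
       = (if k = 0 then 0 else \<rho> * measure_pmf.prob (Pi_pmf I d D) {H. card {w\<in>W. B w H} = k - 1})
         + (1 - \<rho>) * measure_pmf.prob (Pi_pmf I d D) {H. card {w\<in>W. B w H} = k}"
proof -
  let ?M = "Pi_pmf I d D"
  let ?c = "\<lambda>H. card {w\<in>W. B w H}"
  have c_det: "?c H = ?c H'" if agree: "\<forall>x\<in>(\<Union>w\<in>W. E w). H x = H' x" for H H'
  proof -
    have "{w\<in>W. B w H} = {w\<in>W. B w H'}"
      using B agree by (intro Collect_cong conj_cong refl) auto
    then show ?thesis by simp
  qed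
  have indep: "measure_pmf.prob ?M {H. P H \<and> R (?c H)}
      = measure_pmf.prob ?M {H. P H} * measure_pmf.prob ?M {H. R (?c H)}"
    if P_det: "\<And>H H'. (\<forall>x\<in>E a. H x = H' x) \<Longrightarrow> P H = P H'" for P R
  proof (rule Pi_pmf_prob_indep[OF I])
    show "E a \<subseteq> I" "(\<Union>w\<in>W. E w) \<subseteq> I" using E by auto
    show "E a \<inter> (\<Union>w\<in>W. E w) = {}" using disj by blast
  qed (use P_det c_det in metis)+
  have a_det: "\<And>H H'. (\<forall>x\<in>E a. H x = H' x) \<Longrightarrow> B a H = B a H'" using B by blast
  have "{H. \<not> B a H} = UNIV - {H. B a H}" by auto
  then have pna: "measure_pmf.prob ?M {H. \<not> B a H} = 1 - \<rho>"
    using measure_pmf.prob_compl[of "{H. B a H}" ?M] pa by simp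
  have "{w\<in>insert a W. B w H} = (if B a H then insert a {w\<in>W. B w H} else {w\<in>W. B w H})" for H
    by auto
  then have "card {w\<in>insert a W. B w H} = (if B a H then Suc (?c H) else ?c H)" for H
    using W by auto
  then have split: "{H. card {w\<in>insert a W. B w H} = k}
      = {H. B a H \<and> (0 < k \<and> ?c H = k - 1)} \<union> {H. \<not> B a H \<and> ?c H = k}"
    by auto
  have "measure_pmf.prob ?M {H. card {w\<in>insert a W. B w H} = k}
      = measure_pmf.prob ?M {H. B a H \<and> (0 < k \<and> ?c H = k - 1)}
        + measure_pmf.prob ?M {H. \<not> B a H \<and> ?c H = k}"
    unfolding split by (rule measure_pmf.finite_measure_Union) auto
  also have "\<dots> = \<rho> * measure_pmf.prob ?M {H. 0 < k \<and> ?c H = k - 1}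
      + (1 - \<rho>) * measure_pmf.prob ?M {H. ?c H = k}"
    using indep[OF a_det, where R = "\<lambda>c. 0 < k \<and> c = k - 1"]
      indep[where P = "\<lambda>H. \<not> B a H" and R = "\<lambda>c. c = k"] a_det pa pna by simp
  finally show ?thesis by (cases k) simp_all
qed

lemma Pi_pmf_prob_card_binomial:
  fixes B :: "'w \<Rightarrow> ('a \<Rightarrow> 'b) \<Rightarrow> bool" and E :: "'w \<Rightarrow> 'a set"
  assumes I: "finite I" and "finite W"
    and "\<And>w. w \<in> W \<Longrightarrow> E w \<subseteq> I"
    and "\<And>w w'. w \<in> W \<Longrightarrow> w' \<in> W \<Longrightarrow> w \<noteq> w' \<Longrightarrow> E w \<inter> E w' = {}"
    and "\<And>w H H'. w \<in> W \<Longrightarrow> (\<forall>x\<in>E w. H x = H' x) \<Longrightarrow> B w H = B w H'"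
    and "\<And>w. w \<in> W \<Longrightarrow> measure_pmf.prob (Pi_pmf I d D) {H. B w H} = \<rho>"
    and \<rho>: "0 \<le> \<rho>" "\<rho> \<le> 1"
  shows "measure_pmf.prob (Pi_pmf I d D) {H. card {w\<in>W. B w H} = k}
       = pmf (binomial_pmf (card W) \<rho>) k"
  using assms(2-6)
proof (induction W arbitrary: k rule: finite_induct)
  case empty
  then show ?case using \<rho> by (simp add: binomial_pmf_0 indicator_def)
next
  case (insert a W k)
  have "measure_pmf.prob (Pi_pmf I d D) {H. card {w\<in>W. B w H} = j} = pmf (binomial_pmf (card W) \<rho>) j"
    for j using insert.prems by (intro insert.IH) auto
  moreover have "E a \<inter> E w = {}" if "w \<in> W" for w
    using that insert.prems(2) insert.hyps(2) by blast
  ultimately show ?case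
    using Pi_pmf_prob_card_insert[OF I insert.hyps, of E B] insert.hyps insert.prems \<rho>
    by (simp del: pmf_binomial add: pmf_binomial_Suc)
qed

lemma finite_hsets: "finite (hsets N)"
proof (rule finite_subset)
  show "hsets N \<subseteq> Pow {1..N}" unfolding hsets_def by blast
qed simp

lemma insert_insert_in_hsets:
  assumes "a \<in> {1..N}" "b \<in> {1..N}" "a \<noteq> b" "S \<subseteq> {1..N}"
  shows "insert a (insert b S) \<in> hsets N"
proof -
  have "finite (insert a (insert b S))" using assms(4) by (simp add: finite_subset)
  then have "card {a, b} \<le> card (insert a (insert b S))" by (intro card_mono) auto
  then show ?thesis using assms unfolding hsets_def by auto
qed

lemma pmf_pois_0: "0 \<le> r \<Longrightarrow> pmf (pois r) 0 = exp (- r)"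
  by (auto simp: pois_def)

lemma poisson_hypergraph_prob_some_edge:
  assumes \<beta>: "\<And>j. j \<ge> 2 \<Longrightarrow> \<beta> j \<ge> 0" and E: "E \<subseteq> hsets N"
  shows "measure_pmf.prob (poisson_hypergraph N \<beta>) {H. \<exists>A\<in>E. 0 < H A}
       = 1 - exp (- (\<Sum>A\<in>E. real N * \<beta> (card A) / real (N choose card A)))"
proof -
  let ?M = "poisson_hypergraph N \<beta>"
  have "{H. \<exists>A\<in>E. 0 < H A} = UNIV - {H. \<forall>A\<in>E. H A = (0 :: nat)}" by auto
  then have "measure_pmf.prob ?M {H. \<exists>A\<in>E. 0 < H A} = 1 - measure_pmf.prob ?M {H. \<forall>A\<in>E. H A = 0}"
    using measure_pmf.prob_compl[of "{H. \<forall>A\<in>E. H A = 0}" ?M] by simp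
  also have "measure_pmf.prob ?M {H. \<forall>A\<in>E. H A = 0}
      = (\<Prod>A\<in>E. pmf (pois (real N * \<beta> (card A) / real (N choose card A))) 0)"
    unfolding poisson_hypergraph_def by (rule Pi_pmf_prob_all_eq[OF finite_hsets E])
  also have "\<dots> = (\<Prod>A\<in>E. exp (- (real N * \<beta> (card A) / real (N choose card A))))"
    using E \<beta> by (intro prod.cong refl pmf_pois_0) (auto simp: hsets_def)
  also have "\<dots> = exp (- (\<Sum>A\<in>E. real N * \<beta> (card A) / real (N choose card A)))"
    using finite_subset[OF E finite_hsets] by (simp add: exp_sum[symmetric] sum_negf)
  finally show ?thesis .
qed

lemma sum_Pow_card:
  fixes g :: "nat \<Rightarrow> 'a :: comm_semiring_1"
  assumes "finite V"
  shows "(\<Sum>S\<in>Pow V. g (card S)) = (\<Sum>j=0..card V. of_nat (card V choose j) * g j)"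
proof -
  have "card ` Pow V \<subseteq> {0..card V}" using card_mono[OF assms] by auto
  then have "(\<Sum>S\<in>Pow V. g (card S)) = (\<Sum>j=0..card V. \<Sum>S\<in>{S\<in>Pow V. card S = j}. g (card S))"
    using assms by (intro sum.group[symmetric]) auto
  also have "\<dots> = (\<Sum>j=0..card V. of_nat (card V choose j) * g j)"
    using n_subsets[OF assms] by (intro sum.cong refl) (simp add: Pow_def)
  finally show ?thesis .
qed

lemma sum_edges_through_pair_eq_lambda2:
  assumes "finite V" "v \<notin> V" "w \<notin> V" "v \<noteq> w"
  shows "(\<Sum>A\<in>(\<lambda>S. insert v (insert w S)) ` Pow V. real N * \<beta> (card A) / real (N choose card A))
       = lambda2 \<beta> N (card V)"
proof -
  have "S = insert v (insert w S) - {v, w}" if "S \<in> Pow V" for S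
    using that assms(2,3) by blast
  then have "inj_on (\<lambda>S. insert v (insert w S)) (Pow V)"
    by (intro inj_onI) metis
  moreover have "card (insert v (insert w S)) = card S + 2" if "S \<in> Pow V" for S
  proof -
    have "finite S" "v \<notin> S" "w \<notin> S" using that assms(1-3) finite_subset by auto
    then show ?thesis using assms(4) by simp
  qed
  ultimately have "(\<Sum>A\<in>(\<lambda>S. insert v (insert w S)) ` Pow V. real N * \<beta> (card A) / real (N choose card A))
      = (\<Sum>S\<in>Pow V. real N * \<beta> (card S + 2) / real (N choose (card S + 2)))"
    by (simp add: sum.reindex)
  also have "\<dots> = (\<Sum>j=0..card V. real (card V choose j) * (real N * \<beta> (j + 2) / real (N choose (j + 2))))"
    using sum_Pow_card[OF assms(1), of "\<lambda>j. real N * \<beta> (j + 2) / real (N choose (j + 2))"]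
    by simp
  also have "\<dots> = lambda2 \<beta> N (card V)"
    unfolding lambda2_def sum_distrib_left by (intro sum.cong refl) (simp add: field_simps)
  finally show ?thesis .
qed

lemma insert_insert_Pow_subset_hsets:
  assumes "v \<in> {1..N}" "w \<in> {1..N}" "v \<noteq> w" "V \<subseteq> {1..N}"
  shows "(\<lambda>S. insert v (insert w S)) ` Pow V \<subseteq> hsets N"
  using assms by (auto intro!: insert_insert_in_hsets)

lemma insert_insert_Pow_disjoint:
  assumes "w \<notin> V" "v \<noteq> w" "w \<noteq> w'"
  shows "(\<lambda>S. insert v (insert w S)) ` Pow V \<inter> (\<lambda>S. insert v (insert w' S)) ` Pow V = {}"
proof (rule ccontr)
  assume "(\<lambda>S. insert v (insert w S)) ` Pow V \<inter> (\<lambda>S. insert v (insert w' S)) ` Pow V \<noteq> {}"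
  then obtain S S' where "S' \<subseteq> V" "insert v (insert w S) = insert v (insert w' S')" by blast
  then have "w \<in> insert v (insert w' S')" "S' \<subseteq> V" by (metis insertI1 insertI2, simp)
  then show False using assms by auto
qed

lemma poisson_hypergraph_prob_edge_through_pair:
  assumes \<beta>: "\<And>j. j \<ge> 2 \<Longrightarrow> \<beta> j \<ge> 0"
    and E: "(\<lambda>S. insert v (insert w S)) ` Pow V \<subseteq> hsets N"
    and "v \<notin> V" "w \<notin> V" "v \<noteq> w"
  shows "measure_pmf.prob (poisson_hypergraph N \<beta>)
           {H. \<exists>A\<in>(\<lambda>S. insert v (insert w S)) ` Pow V. 0 < H A}
       = rho \<beta> N (card V)"
proof -
  have "V \<in> Pow V" by simp
  then have "insert v (insert w V) \<in> hsets N" using E by blast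
  then have "finite V" unfolding hsets_def by (auto dest: finite_subset)
  then show ?thesis
    using poisson_hypergraph_prob_some_edge[OF \<beta> E] sum_edges_through_pair_eq_lambda2[OF _ assms(3-5)]
    unfolding rho_def by simp
qed

lemma rho_bounds:
  assumes "\<And>j. j \<ge> 2 \<Longrightarrow> \<beta> j \<ge> 0"
  shows "0 \<le> rho \<beta> N m" "rho \<beta> N m \<le> 1"
proof -
  have "lambda2 \<beta> N m \<ge> 0" unfolding lambda2_def using assms
    by (intro mult_nonneg_nonneg sum_nonneg divide_nonneg_nonneg) auto
  then show "0 \<le> rho \<beta> N m" "rho \<beta> N m \<le> 1" unfolding rho_def by auto
qed

section \<open>The breadth-first exploration\<close>

definition bf_probed_edges :: "nat \<Rightarrow> nat list \<Rightarrow> nat \<Rightarrow> nat set set" where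
  "bf_probed_edges N os k =
     {insert (os ! (k - 1)) (insert w S) | w S. w \<in> {1..N} - set os \<and> S \<subseteq> set (take (k - 1) os)}"

lemma bf_children_cong:
  assumes "\<forall>A\<in>bf_probed_edges N os k. H A = H' A"
  shows "bf_children N H os k = bf_children N H' os k"
proof -
  have "H (insert (os ! (k - 1)) (insert w S)) = H' (insert (os ! (k - 1)) (insert w S))"
    if "w \<in> {1..N} - set os" "S \<subseteq> set (take (k - 1) os)" for w S
    using assms that unfolding bf_probed_edges_def by blast
  then show ?thesis unfolding bf_children_def by (intro Collect_cong conj_cong refl ex_cong) auto
qed

lemma bf_order_cong:
  assumes "\<forall>A\<in>(\<Union>k\<in>{1..m}. bf_probed_edges N (bf_pre N (bf_order N H (k - 1)) k) k). H A = H' A"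
  shows "bf_order N H m = bf_order N H' m"
  using assms
proof (induction m)
  case (Suc m)
  have "bf_order N H m = bf_order N H' m" using Suc.prems by (intro Suc.IH) auto
  moreover have "bf_probed_edges N (bf_pre N (bf_order N H (Suc m - 1)) (Suc m)) (Suc m)
      \<subseteq> (\<Union>k\<in>{1..Suc m}. bf_probed_edges N (bf_pre N (bf_order N H (k - 1)) k) k)"
    by (intro UN_upper) auto
  then have "bf_children N H (bf_pre N (bf_order N H m) (Suc m)) (Suc m)
      = bf_children N H' (bf_pre N (bf_order N H m) (Suc m)) (Suc m)"
    using Suc.prems by (intro bf_children_cong) auto
  ultimately show ?case by (simp add: Let_def)
qed simp

lemma bf_pre_wf:
  assumes "distinct os" "set os \<subseteq> {1..N}" "k - 1 \<le> length os" "k \<le> N"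
  shows "distinct (bf_pre N os k) \<and> set (bf_pre N os k) \<subseteq> {1..N} \<and> k \<le> length (bf_pre N os k)"
proof (cases "length os < k")
  case True
  have "\<not> {1..N} \<subseteq> set os"
  proof
    assume "{1..N} \<subseteq> set os"
    then have "N \<le> length os" using card_mono[of "set os" "{1..N}"] card_length[of os] by simp
    with True assms(4) show False by simp
  qed
  then have "Min ({1..N} - set os) \<in> {1..N} - set os" by (intro Min_in) auto
  then show ?thesis using True assms unfolding bf_pre_def by auto
qed (use assms in \<open>auto simp: bf_pre_def\<close>)

lemma bf_order_wf:
  "k \<le> N \<Longrightarrow> distinct (bf_order N H k) \<and> set (bf_order N H k) \<subseteq> {1..N} \<and> k \<le> length (bf_order N H k)"
proof (induction k)
  case (Suc k)
  let ?os = "bf_pre N (bf_order N H k) (Suc k)"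
  have "distinct ?os \<and> set ?os \<subseteq> {1..N} \<and> Suc k \<le> length ?os"
    using Suc by (intro bf_pre_wf) auto
  moreover have "bf_children N H ?os (Suc k) \<subseteq> {1..N} - set ?os"
    unfolding bf_children_def by auto
  moreover from this have "finite (bf_children N H ?os (Suc k))"
    by (rule finite_subset) simp
  ultimately show ?case by (auto simp: Let_def)
qed simp

lemma bf_pre_bf_order_wf:
  fixes H :: "nat set \<Rightarrow> nat"
  assumes "1 \<le> k" "k \<le> N"
  defines "os \<equiv> bf_pre N (bf_order N H (k - 1)) k"
  shows "distinct os \<and> set os \<subseteq> {1..N} \<and> k \<le> length os"
  unfolding os_def using bf_order_wf[of "k - 1" N H] assms by (intro bf_pre_wf) auto

lemma bf_order_prefix: "k \<le> m \<Longrightarrow> \<exists>ys. bf_order N H m = bf_order N H k @ ys"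
proof (induction m rule: dec_induct)
  case (step m)
  have "\<exists>ys. bf_order N H (Suc m) = bf_order N H m @ ys" by (auto simp: Let_def bf_pre_def)
  with step.IH show ?case by (metis append.assoc)
qed simp

lemma bf_pre_prefix:
  assumes "1 \<le> k" "k \<le> i"
  shows "\<exists>ys. bf_pre N (bf_order N H (i - 1)) i = bf_pre N (bf_order N H (k - 1)) k @ ys"
proof (cases "k = i")
  case False
  have "\<exists>ys. bf_order N H k = bf_pre N (bf_order N H (k - 1)) k @ ys"
    using assms(1) by (cases k) (auto simp: Let_def)
  moreover have "\<exists>ys. bf_order N H (i - 1) = bf_order N H k @ ys"
    using False assms by (intro bf_order_prefix) auto
  moreover have "\<exists>ys. bf_pre N (bf_order N H (i - 1)) i = bf_order N H (i - 1) @ ys"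
    by (auto simp: bf_pre_def)
  ultimately show ?thesis by (metis append.assoc)
qed simp

lemma nth_notin_set_take: "distinct xs \<Longrightarrow> j < length xs \<Longrightarrow> xs ! j \<notin> set (take j xs)"
  by (auto simp: in_set_conv_nth nth_eq_iff_index_eq)

lemma bf_probed_edges_subset_hsets:
  assumes "distinct os" "set os \<subseteq> {1..N}" "1 \<le> k" "k \<le> length os"
  shows "bf_probed_edges N os k \<subseteq> hsets N"
proof
  fix A assume "A \<in> bf_probed_edges N os k"
  then obtain w S where A: "A = insert (os ! (k - 1)) (insert w S)"
    and w: "w \<in> {1..N} - set os" and S: "S \<subseteq> set (take (k - 1) os)"
    unfolding bf_probed_edges_def by blast
  have "os ! (k - 1) \<in> set os" using assms(3,4) by simp
  moreover have "set (take (k - 1) os) \<subseteq> set os" by (rule set_take_subset)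
  ultimately show "A \<in> hsets N"
    unfolding A using w S assms(2) by (intro insert_insert_in_hsets) auto
qed

text \<open>The left set has at most one element outside v(1), ..., v(i-1), the right one has two.\<close>

lemma bf_probed_edges_neq:
  assumes "distinct os" "i \<le> length os" "1 \<le> k" "k < i"
    and "S \<subseteq> set (take (k - 1) os)" "w' \<notin> set os"
  shows "insert (os ! (k - 1)) (insert w S) \<noteq> insert (os ! (i - 1)) (insert w' S')"
proof
  let ?V = "set (take (i - 1) os)"
  assume eq: "insert (os ! (k - 1)) (insert w S) = insert (os ! (i - 1)) (insert w' S')"
  have "os ! (k - 1) \<in> ?V" using assms(2-4) by (auto simp: in_set_conv_nth intro!: exI[of _ "k - 1"])
  moreover have "S \<subseteq> ?V"
  proof -
    have "k - 1 \<le> i - 1" using assms(4) by simp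
    then show ?thesis using assms(5) set_take_subset_set_take[of "k - 1" "i - 1" os] by blast
  qed
  moreover have "os ! (i - 1) \<notin> ?V" using assms(1-4) by (intro nth_notin_set_take) auto
  moreover have "w' \<notin> ?V" using assms(6) by (meson in_set_takeD)
  ultimately have "os ! (i - 1) = w" "w' = w"
    using eq by (metis insertCI insertE subsetD)+
  moreover have "os ! (i - 1) \<noteq> w'" using assms(2-4,6) by auto
  ultimately show False by simp
qed

lemma bf_Z_Suc: "bf_Z N H (Suc k) = bf_Z N H k + int (bf_C N H (Suc k)) - 1"
  by (simp add: bf_Z_def)

lemma bf_P_eq_Min: "bf_P N H k = 1 - Min (bf_Z N H ` {0..k})"
  by (simp add: bf_P_def bf_Z_def)

lemma bf_P_Suc: "bf_P N H (Suc k) = max (bf_P N H k) (1 - bf_Z N H (Suc k))"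
proof -
  have "bf_Z N H ` {0..Suc k} = insert (bf_Z N H (Suc k)) (bf_Z N H ` {0..k})"
    by (simp add: atLeast0_atMost_Suc)
  then show ?thesis unfolding bf_P_eq_Min by (simp add: Min_insert)
qed

lemma bf_P_ge: "1 - bf_Z N H k \<le> bf_P N H k"
  unfolding bf_P_eq_Min by (simp add: Min_le)

lemma length_bf_order_Suc:
  "length (bf_order N H (Suc k)) = length (bf_pre N (bf_order N H k) (Suc k)) + bf_C N H (Suc k)"
proof -
  let ?os = "bf_pre N (bf_order N H k) (Suc k)"
  have "bf_children N H ?os (Suc k) \<subseteq> {1..N}" unfolding bf_children_def by auto
  then have "finite (bf_children N H ?os (Suc k))" by (rule finite_subset) simp
  then show ?thesis by (simp add: Let_def bf_C_def)
qed

text \<open>A patch is put exactly when the walk would drop below its running minimum.\<close>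

lemma length_bf_pre_bf_order:
  "int (length (bf_pre N (bf_order N H k) (Suc k))) = int k + bf_Z N H k + bf_P N H k"
proof (induction k)
  case 0
  then show ?case by (simp add: bf_pre_def bf_Z_def bf_P_def)
next
  case (Suc k)
  define n where "n = length (bf_order N H (Suc k))"
  have n: "int n = int (Suc k) + bf_Z N H (Suc k) + bf_P N H k"
    using Suc length_bf_order_Suc[of N H k] bf_Z_Suc[of N H k] unfolding n_def by simp
  have "0 \<le> bf_Z N H (Suc k) + bf_P N H k"
    using bf_P_ge[of N H k] bf_Z_Suc[of N H k] by linarith
  then have "n < Suc (Suc k) \<longleftrightarrow> bf_P N H (Suc k) = bf_P N H k + 1"
    and "\<not> n < Suc (Suc k) \<longleftrightarrow> bf_P N H (Suc k) = bf_P N H k"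
    using n unfolding bf_P_Suc by linarith+
  then show ?case using n unfolding n_def bf_pre_def by auto
qed

section \<open>The history of the exploration\<close>

definition bf_history :: "nat \<Rightarrow> nat \<Rightarrow> (nat set \<Rightarrow> nat) \<Rightarrow> nat list list" where
  "bf_history N i H = map (bf_order N H) [0..<i]"

definition bf_history_probed_edges :: "nat \<Rightarrow> nat \<Rightarrow> nat list list \<Rightarrow> nat set set" where
  "bf_history_probed_edges N i t = (\<Union>k\<in>{1..i-1}. bf_probed_edges N (bf_pre N (t ! (k - 1)) k) k)"

definition bf_history_pre :: "nat \<Rightarrow> nat \<Rightarrow> nat list list \<Rightarrow> nat list" where
  "bf_history_pre N i t = bf_pre N (t ! (i - 1)) i"

lemma bf_history_pre_bf_history:
  "1 \<le> i \<Longrightarrow> bf_history_pre N i (bf_history N i H) = bf_pre N (bf_order N H (i - 1)) i"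
  by (simp add: bf_history_pre_def bf_history_def)

lemma bf_history_probed_edges_bf_history:
  "bf_history_probed_edges N i (bf_history N i H)
     = (\<Union>k\<in>{1..i-1}. bf_probed_edges N (bf_pre N (bf_order N H (k - 1)) k) k)"
  unfolding bf_history_probed_edges_def bf_history_def by (intro SUP_cong refl) auto

lemma bf_history_determined:
  assumes "\<forall>A\<in>bf_history_probed_edges N i (bf_history N i H). H A = H' A"
  shows "bf_history N i H' = bf_history N i H"
proof -
  have "bf_order N H k = bf_order N H' k" if "k < i" for k
  proof (rule bf_order_cong)
    have "(\<Union>k'\<in>{1..k}. bf_probed_edges N (bf_pre N (bf_order N H (k' - 1)) k') k')
        \<subseteq> bf_history_probed_edges N i (bf_history N i H)"
      unfolding bf_history_probed_edges_bf_history using that by (intro UN_mono) auto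
    with assms show "\<forall>A\<in>(\<Union>k'\<in>{1..k}. bf_probed_edges N (bf_pre N (bf_order N H (k' - 1)) k') k').
        H A = H' A" by blast
  qed
  then show ?thesis unfolding bf_history_def by simp
qed

lemma bf_history_probed_edges_subset_hsets:
  assumes "i \<le> N" "t \<in> range (bf_history N i)"
  shows "bf_history_probed_edges N i t \<subseteq> hsets N"
proof -
  obtain H where t: "t = bf_history N i H" using assms(2) by blast
  have "bf_probed_edges N (bf_pre N (bf_order N H (k - 1)) k) k \<subseteq> hsets N" if "k \<in> {1..i-1}" for k
  proof -
    have "1 \<le> k" "k \<le> N" using that assms(1) by auto
    then show ?thesis using bf_pre_bf_order_wf[of k N H] by (intro bf_probed_edges_subset_hsets) auto
  qed
  then show ?thesis unfolding t bf_history_probed_edges_bf_history by blast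
qed

lemma bf_history_pre_probed_edges_subset_hsets:
  assumes "1 \<le> i" "i \<le> N" "t \<in> range (bf_history N i)"
  shows "bf_probed_edges N (bf_history_pre N i t) i \<subseteq> hsets N"
proof -
  obtain H where t: "t = bf_history N i H" using assms(3) by blast
  show ?thesis unfolding t bf_history_pre_bf_history[OF assms(1)]
    using bf_pre_bf_order_wf[OF assms(1,2), of H] assms(1) by (intro bf_probed_edges_subset_hsets) auto
qed

lemma bf_history_probed_edges_disjoint:
  assumes "1 \<le> i" "i \<le> N" "t \<in> range (bf_history N i)"
  shows "bf_history_probed_edges N i t \<inter> bf_probed_edges N (bf_history_pre N i t) i = {}"
proof -
  obtain H where t: "t = bf_history N i H" using assms(3) by blast
  define os where "os = bf_pre N (bf_order N H (i - 1)) i"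
  have os: "distinct os" "i \<le> length os"
    using bf_pre_bf_order_wf[OF assms(1,2), of H] unfolding os_def by auto
  have "A \<notin> bf_probed_edges N os i"
    if k: "k \<in> {1..i-1}" and A: "A \<in> bf_probed_edges N (bf_pre N (bf_order N H (k - 1)) k) k" for k A
  proof
    define osk where "osk = bf_pre N (bf_order N H (k - 1)) k"
    have k': "1 \<le> k" "k < i" "k \<le> N" using k assms by auto
    obtain ys where ys: "os = osk @ ys"
      using bf_pre_prefix[of k i N H] k' unfolding os_def osk_def by auto
    have "k - 1 < length osk" using bf_pre_bf_order_wf[of k N H] k' unfolding osk_def by auto
    then have "osk ! (k - 1) = os ! (k - 1)" "take (k - 1) osk = take (k - 1) os"
      unfolding ys by (simp_all add: nth_append)
    then obtain w S where A_k: "A = insert (os ! (k - 1)) (insert w S)"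
      and S: "S \<subseteq> set (take (k - 1) os)"
      using A unfolding bf_probed_edges_def osk_def[symmetric] by auto
    assume "A \<in> bf_probed_edges N os i"
    then obtain w' S' where A_i: "A = insert (os ! (i - 1)) (insert w' S')" and w': "w' \<notin> set os"
      unfolding bf_probed_edges_def by blast
    show False using bf_probed_edges_neq[OF os k'(1,2) S w', of w S'] A_k A_i by simp
  qed
  moreover have "bf_history_pre N i t = os"
    unfolding t os_def using assms(1) by (rule bf_history_pre_bf_history)
  ultimately show ?thesis unfolding t bf_history_probed_edges_bf_history by blast
qed

lemma bf_C_eq_card_bf_children_history:
  "1 \<le> i \<Longrightarrow> bf_C N H i = card (bf_children N H (bf_history_pre N i (bf_history N i H)) i)"
  by (simp add: bf_C_def bf_history_pre_bf_history)

lemma bf_Z_P_eq_if_bf_history_eq: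
  assumes "bf_history N i H = bf_history N i H'"
  shows "bf_Z N H (i - 1) = bf_Z N H' (i - 1) \<and> bf_P N H (i - 1) = bf_P N H' (i - 1)"
proof -
  have order: "bf_order N H k = bf_order N H' k" if "k < i" for k
    using assms that unfolding bf_history_def map_eq_conv by simp
  have C: "bf_C N H m = bf_C N H' m" if m: "m \<in> {1..i-1}" for m
  proof -
    obtain k where k: "m = Suc k" "Suc k < i" using m by (cases m) auto
    then show ?thesis using length_bf_order_Suc[of N H k] length_bf_order_Suc[of N H' k]
        order[of k] order[of "Suc k"] by simp
  qed
  have Z: "bf_Z N H j = bf_Z N H' j" if "j \<le> i - 1" for j
    unfolding bf_Z_def using that C by (intro sum.cong refl) auto
  then have "bf_Z N H ` {0..i-1} = bf_Z N H' ` {0..i-1}" by (intro image_cong) auto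
  with Z show ?thesis unfolding bf_P_eq_Min by simp
qed

lemma finite_range_bf_history:
  assumes "i \<le> N"
  shows "finite (range (bf_history N i))"
proof -
  define L where "L = {xs. set xs \<subseteq> {1..N} \<and> length xs \<le> N}"
  have "bf_order N H k \<in> L" if "k < i" for H k
  proof -
    have "distinct (bf_order N H k)" "set (bf_order N H k) \<subseteq> {1..N}"
      using bf_order_wf[of k N H] that assms by auto
    moreover from this have "length (bf_order N H k) \<le> N"
      using card_mono[of "{1..N}" "set (bf_order N H k)"] by (simp add: distinct_card)
    ultimately show ?thesis unfolding L_def by simp
  qed
  then have "range (bf_history N i) \<subseteq> {ts. set ts \<subseteq> L \<and> length ts \<le> i}"
    unfolding bf_history_def by auto
  moreover have "finite {ts. set ts \<subseteq> L \<and> length ts \<le> i}"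
    unfolding L_def by (intro finite_lists_length_le) (auto intro: finite_lists_length_le)
  ultimately show ?thesis by (rule finite_subset)
qed

lemma prob_card_bf_children:
  assumes \<beta>: "\<And>j. j \<ge> 2 \<Longrightarrow> \<beta> j \<ge> 0"
    and os: "distinct os" "set os \<subseteq> {1..N}" and i: "1 \<le> i" "i \<le> length os"
  shows "measure_pmf.prob (poisson_hypergraph N \<beta>) {H. card (bf_children N H os i) = k}
       = pmf (binomial_pmf (N - length os) (rho \<beta> N (i - 1))) k"
proof -
  define v where "v = os ! (i - 1)"
  define V where "V = set (take (i - 1) os)"
  define W where "W = {1..N} - set os"
  define E where "E = (\<lambda>w. (\<lambda>S. insert v (insert w S)) ` Pow V)"
  have v: "v \<in> set os" "v \<notin> V"
    unfolding v_def V_def using os(1) i by (simp_all add: nth_notin_set_take)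
  have V: "V \<subseteq> set os" "card V = i - 1"
    unfolding V_def using os(1) i by (auto simp: distinct_card dest: in_set_takeD)
  have W: "w \<in> {1..N}" "w \<notin> V" "v \<noteq> w" if "w \<in> W" for w
    using that v V(1) unfolding W_def by auto
  have E: "E w \<subseteq> hsets N" if "w \<in> W" for w
    unfolding E_def using v(1) V(1) os(2) W[OF that] by (intro insert_insert_Pow_subset_hsets) auto
  have prob_child: "measure_pmf.prob (poisson_hypergraph N \<beta>) {H. \<exists>A\<in>E w. 0 < H A}
      = rho \<beta> N (i - 1)" if "w \<in> W" for w
    using poisson_hypergraph_prob_edge_through_pair[OF \<beta> E[OF that, unfolded E_def] v(2) W(2,3)[OF that]]
    unfolding E_def V(2) .
  have "card W = N - length os"
    unfolding W_def using os by (simp add: card_Diff_subset distinct_card)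
  moreover have "bf_children N H os i = {w\<in>W. \<exists>A\<in>E w. 0 < H A}" for H
    unfolding bf_children_def W_def E_def v_def V_def by auto
  moreover have "measure_pmf.prob (poisson_hypergraph N \<beta>) {H. card {w\<in>W. \<exists>A\<in>E w. 0 < H A} = k}
      = pmf (binomial_pmf (card W) (rho \<beta> N (i - 1))) k"
    unfolding poisson_hypergraph_def
  proof (rule Pi_pmf_prob_card_binomial[OF finite_hsets])
    show "finite W" unfolding W_def by simp
    show "E w \<inter> E w' = {}" if "w \<in> W" "w' \<in> W" "w \<noteq> w'" for w w'
      unfolding E_def using W that by (intro insert_insert_Pow_disjoint) auto
    show "(\<exists>A\<in>E w. 0 < H A) = (\<exists>A\<in>E w. 0 < H' A)" if "\<forall>A\<in>E w. H A = H' A" for w H H'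
      using that by auto
  qed (use E prob_child[unfolded poisson_hypergraph_def] rho_bounds[OF \<beta>] in auto)
  ultimately show ?thesis by simp
qed

lemma prob_card_bf_children_given_history:
  assumes \<beta>: "\<And>j. j \<ge> 2 \<Longrightarrow> \<beta> j \<ge> 0" and i: "1 \<le> i" "i \<le> N"
  shows "measure_pmf.prob (poisson_hypergraph N \<beta>)
           {H'. card (bf_children N H' (bf_history_pre N i (bf_history N i H)) i) = k}
       = pmf (binomial_pmf (nat (int N - int (i - 1) - bf_Z N H (i - 1) - bf_P N H (i - 1)))
                           (rho \<beta> N (i - 1))) k"
proof -
  define os where "os = bf_pre N (bf_order N H (i - 1)) i"
  have "bf_history_pre N i (bf_history N i H) = os"
    unfolding os_def using i(1) by (rule bf_history_pre_bf_history)
  moreover have "N - length os = nat (int N - int (i - 1) - bf_Z N H (i - 1) - bf_P N H (i - 1))"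
    using length_bf_pre_bf_order[of N H "i - 1"] i(1) unfolding os_def by simp
  moreover have "measure_pmf.prob (poisson_hypergraph N \<beta>) {H'. card (bf_children N H' os i) = k}
      = pmf (binomial_pmf (N - length os) (rho \<beta> N (i - 1))) k"
    using bf_pre_bf_order_wf[OF i, of H] i(1) unfolding os_def
    by (intro prob_card_bf_children[OF \<beta>]) auto
  ultimately show ?thesis by simp
qed

theorem lemma6p1:
  fixes \<beta> :: "nat \<Rightarrow> real" and N i :: nat and z p :: int and k :: nat
  assumes "\<And>j. j \<ge> 2 \<Longrightarrow> \<beta> j \<ge> 0"
    and "summable (\<lambda>j. real j * \<beta> j)"
    and "1 \<le> i" and "i \<le> N"
  shows "measure_pmf.prob (poisson_hypergraph N \<beta>)
           {H. bf_Z N H (i - 1) = z \<and> bf_P N H (i - 1) = p \<and> bf_C N H i = k}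
       = measure_pmf.prob (poisson_hypergraph N \<beta>)
           {H. bf_Z N H (i - 1) = z \<and> bf_P N H (i - 1) = p}
         * pmf (binomial_pmf (nat (int N - int (i - 1) - z - p)) (rho \<beta> N (i - 1))) k"
proof -
  note \<beta> = assms(1) and i = assms(3,4)
  let ?A = "{H. bf_Z N H (i - 1) = z \<and> bf_P N H (i - 1) = p}"
  let ?Q = "\<lambda>t H. card (bf_children N H (bf_history_pre N i t) i) = k"
  let ?b = "pmf (binomial_pmf (nat (int N - int (i - 1) - z - p)) (rho \<beta> N (i - 1))) k"
  have Q_det: "?Q t H = ?Q t H'" if "\<forall>A\<in>bf_probed_edges N (bf_history_pre N i t) i. H A = H' A"
    for t H H' using bf_children_cong[OF that] by simp
  have A_det: "H \<in> ?A \<longleftrightarrow> H' \<in> ?A" if "bf_history N i H = bf_history N i H'" for H H'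
    using bf_Z_P_eq_if_bf_history_eq[OF that] by simp
  have Q_prob: "measure_pmf.prob (poisson_hypergraph N \<beta>) {H'. ?Q (bf_history N i H) H'} = ?b"
    if "H \<in> ?A" for H
    using that prob_card_bf_children_given_history[OF \<beta> i, where H = H and k = k] by simp
  have "measure_pmf.prob (poisson_hypergraph N \<beta>) {H \<in> ?A. ?Q (bf_history N i H) H}
      = measure_pmf.prob (poisson_hypergraph N \<beta>) ?A * ?b"
    unfolding poisson_hypergraph_def
    by (rule Pi_pmf_prob_indep_of_history[where F = "bf_history_probed_edges N i"
          and G = "\<lambda>t. bf_probed_edges N (bf_history_pre N i t) i" and Q = ?Q,
          OF finite_hsets finite_range_bf_history[OF i(2)]
          bf_history_probed_edges_subset_hsets[OF i(2)] bf_history_pre_probed_edges_subset_hsets[OF i]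
          bf_history_probed_edges_disjoint[OF i] bf_history_determined Q_det A_det
          Q_prob[unfolded poisson_hypergraph_def]])
  moreover have "{H \<in> ?A. ?Q (bf_history N i H) H}
      = {H. bf_Z N H (i - 1) = z \<and> bf_P N H (i - 1) = p \<and> bf_C N H i = k}"
    using bf_C_eq_card_bf_children_history[OF i(1)] by auto
  ultimately show ?thesis by simp
qed

end
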